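(* Let $\mathcal{H}=\mathbb{C}^2$ and let $\mathcal{D}=\{\Psi_\rho : \rho \text{ a density operator on } \mathcal{H}\}$ be the set of depolarizing channels, where $\Psi_\rho(A)=(\operatorname{tr}A)\rho$ for all $A\in\mathcal{L}(\mathcal{H})$. For every density operator $\tau$ on $\mathcal{H}\otimes\mathcal{H}$, $$C(\tau,\mathcal{D})=\max_{\Psi\in\mathcal{D}}\operatorname{tr}[\tau J_\Psi]=\frac12\left(1+\|\boldsymbol{b}(\tau_2)\|\right),$$ where $\tau_2=\operatorname{tr}_1\tau$.
   Context: $\{|0\rangle,|1\rangle\}$ is the computational basis of $\mathcal{H}=\mathbb{C}^2$. For a linear map $\Psi$ on $\mathcal{L}(\mathcal{H})$, its Choi operator is $J_\Psi=(\mathrm{id}\otimes\Psi)(P'_+)$ with $P'_+=\sum_{i,j=0}^1|i\rangle\langle j|\otimes|i\rangle\langle j|$. $\operatorname{tr}_1$ denotes the partial trace over the first tensor factor. For an operator $X$ on $\mathcal{H}$, its Bloch vector is $\boldsymbol{b}(X)\in\mathbb{R}^3$ with $b(X)_i=\operatorname{tr}[\sigma_i X]$, $\sigma_1,\sigma_2,\sigma_3$ being the Pauli matrices, and $\|\cdot\|$ is the Euclidean norm on $\mathbb{R}^3$. *)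

theory Defs
  imports "HOL-Analysis.Analysis"
begin

text \<open>Operators on H = C^2 are 2x2 complex matrices indexed by the numeral type 2;
  index 1 corresponds to |0>, index 2 to |1>. Operators on H (x) H are matrices
  indexed by pairs (i,k) :: 2 \<times> 2, the first component referring to the first factor.\<close>

type_synonym op1 = "complex ^ 2 ^ 2"
type_synonym op2 = "complex ^ (2 \<times> 2) ^ (2 \<times> 2)"

definition mtrace :: "complex ^ 'n ^ 'n \<Rightarrow> complex" where
  "mtrace A = (\<Sum>i\<in>UNIV. A $ i $ i)"

definition psd :: "complex ^ 'n ^ 'n \<Rightarrow> bool" where
  "psd A \<longleftrightarrow> (\<forall>v :: complex ^ 'n.
     (let q = (\<Sum>i\<in>UNIV. \<Sum>j\<in>UNIV. cnj (v $ i) * A $ i $ j * v $ j)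
      in Im q = 0 \<and> Re q \<ge> 0))"

definition density :: "complex ^ 'n ^ 'n \<Rightarrow> bool" where
  "density A \<longleftrightarrow> psd A \<and> mtrace A = 1"

definition tensor :: "op1 \<Rightarrow> op1 \<Rightarrow> op2" where
  "tensor A B = (\<chi> p q. A $ fst p $ fst q * B $ snd p $ snd q)"

definition ketbra :: "2 \<Rightarrow> 2 \<Rightarrow> op1" where
  "ketbra i j = (\<chi> a b. if a = i \<and> b = j then 1 else 0)"

definition choi :: "(op1 \<Rightarrow> op1) \<Rightarrow> op2" where
  "choi \<Psi> = (\<Sum>i\<in>UNIV. \<Sum>j\<in>UNIV. tensor (ketbra i j) (\<Psi> (ketbra i j)))"

definition ptrace1 :: "op2 \<Rightarrow> op1" where
  "ptrace1 X = (\<chi> k l. \<Sum>i\<in>UNIV. X $ (i,k) $ (i,l))"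

definition depol_channel :: "op1 \<Rightarrow> (op1 \<Rightarrow> op1)" where
  "depol_channel \<rho> = (\<lambda>A. (\<chi> a b. mtrace A * \<rho> $ a $ b))"

definition depol_set :: "(op1 \<Rightarrow> op1) set" where
  "depol_set = {depol_channel \<rho> | \<rho>. density \<rho>}"

definition pauli1 :: op1 where
  "pauli1 = (\<chi> a b. if a \<noteq> b then 1 else 0)"
definition pauli2 :: op1 where
  "pauli2 = (\<chi> a b. if a = 1 \<and> b = 2 then - \<i> else if a = 2 \<and> b = 1 then \<i> else 0)"
definition pauli3 :: op1 where
  "pauli3 = (\<chi> a b. if a = b then (if a = 1 then 1 else -1) else 0)"

text \<open>Bloch vector b(X)_i = tr[sigma_i X] (real for Hermitian X; we take the real part).\<close>
definition bloch :: "op1 \<Rightarrow> real ^ 3" where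
  "bloch X = vector [Re (mtrace (pauli1 ** X)), Re (mtrace (pauli2 ** X)), Re (mtrace (pauli3 ** X))]"

end

theory Submission
  imports Defs
begin

text \<open>The Choi operator of \<open>\<Psi>\<^sub>\<rho>\<close> is \<open>1 \<otimes> \<rho>\<close>, so
  \<open>tr[\<tau> J] = tr[\<tau>\<^sub>2 \<rho>]\<close>. The qubit density operators are exactly the
  \<open>\<rho> = (1 + r \<cdot> \<sigma>)/2\<close> with \<open>\<parallel>r\<parallel> \<le> 1\<close> (Bloch ball), and in these coordinates
  \<open>tr[\<tau>\<^sub>2 \<rho>] = (1 + s \<cdot> r)/2\<close> with \<open>s = b(\<tau>\<^sub>2)\<close>. By Cauchy-Schwarz this is at
  most \<open>(1 + \<parallel>s\<parallel>)/2\<close>, with equality for \<open>r = s/\<parallel>s\<parallel>\<close>.\<close>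

lemma sum_UNIV_2x2: "sum f (UNIV :: (2 \<times> 2) set) = f (1,1) + f (1,2) + f (2,1) + f (2,2)"
proof -
  have UNIV_eq: "(UNIV :: (2 \<times> 2) set) = {(1,1), (1,2), (2,1), (2,2)}"
    using exhaust_2 by auto
  show ?thesis unfolding UNIV_eq by (simp add: ac_simps)
qed

lemma mtrace_2: "mtrace (A :: op1) = A$1$1 + A$2$2"
  by (simp add: mtrace_def sum_2)

lemma mtrace_mult_2:
  "mtrace ((A :: op1) ** B) = A$1$1 * B$1$1 + A$1$2 * B$2$1 + A$2$1 * B$1$2 + A$2$2 * B$2$2"
  by (simp add: mtrace_def sum_2 matrix_matrix_mult_def)

definition quad_form :: "complex ^ 'n ^ 'n \<Rightarrow> complex ^ 'n \<Rightarrow> complex" where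
  "quad_form A v = (\<Sum>i\<in>UNIV. \<Sum>j\<in>UNIV. cnj (v $ i) * A $ i $ j * v $ j)"

lemma psd_iff_quad_form: "psd A \<longleftrightarrow> (\<forall>v. Im (quad_form A v) = 0 \<and> Re (quad_form A v) \<ge> 0)"
  by (simp add: psd_def quad_form_def Let_def)

lemma quad_form_2:
  "quad_form (A :: op1) v = cnj (v$1) * A$1$1 * v$1 + cnj (v$1) * A$1$2 * v$2
     + cnj (v$2) * A$2$1 * v$1 + cnj (v$2) * A$2$2 * v$2"
  by (simp add: quad_form_def sum_2)

lemma quad_form_2_hermitian:
  fixes A :: op1
  assumes "Im (A$1$1) = 0" "Im (A$2$2) = 0" "A$2$1 = cnj (A$1$2)"
  shows "quad_form A v = of_real (Re (A$1$1) * (cmod (v$1))\<^sup>2 + Re (A$2$2) * (cmod (v$2))\<^sup>2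
    + 2 * Re (cnj (v$1) * A$1$2 * v$2))"
proof -
  have "A$1$1 = of_real (Re (A$1$1))" "A$2$2 = of_real (Re (A$2$2))"
    using assms by (simp_all add: complex_eq_iff)
  then show ?thesis
    unfolding quad_form_2 assms(3) cmod_power2
    by (simp add: complex_eq_iff algebra_simps power2_eq_square)
qed

lemma psd_2x2_iff:
  fixes A :: op1
  shows "psd A \<longleftrightarrow> Im (A$1$1) = 0 \<and> Im (A$2$2) = 0 \<and> A$2$1 = cnj (A$1$2)
    \<and> Re (A$1$1) \<ge> 0 \<and> Re (A$2$2) \<ge> 0 \<and> (cmod (A$1$2))\<^sup>2 \<le> Re (A$1$1) * Re (A$2$2)"
  (is "_ \<longleftrightarrow> ?hermitian \<and> ?diag \<and> ?det")
proof
  assume "psd A"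
  then have nonneg: "Im (quad_form A (vector [x, y])) = 0" "Re (quad_form A (vector [x, y])) \<ge> 0"
    for x y by (simp_all add: psd_iff_quad_form)
  have diag: "Im (A$1$1) = 0" "Im (A$2$2) = 0" "Re (A$1$1) \<ge> 0" "Re (A$2$2) \<ge> 0"
    using nonneg[of 1 0] nonneg[of 0 1] by (simp_all add: quad_form_2)
  have herm: "A$2$1 = cnj (A$1$2)"
  proof -
    have "Im (A$1$2 + A$2$1) = 0" "Re (A$1$2 - A$2$1) = 0"
      using nonneg(1)[of 1 1] nonneg(1)[of 1 \<i>] diag by (simp_all add: quad_form_2 algebra_simps)
    then show ?thesis by (simp add: complex_eq_iff)
  qed
  define a d c where "a = Re (A$1$1)" and "d = Re (A$2$2)" and "c = A$1$2"
  have form: "a * (cmod x)\<^sup>2 + d * (cmod y)\<^sup>2 + 2 * Re (cnj x * c * y) \<ge> 0" for x y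
    using nonneg(2)[of x y] unfolding quad_form_2_hermitian[OF diag(1,2) herm]
    by (simp add: a_def d_def c_def)
  \<comment> \<open>The third test vector is only needed when \<open>a = d = 0\<close>.\<close>
  have "a * (a * d - (cmod c)\<^sup>2) \<ge> 0"
    using form[of "- c" a] unfolding cmod_power2 by (simp add: power2_eq_square algebra_simps)
  moreover have "d * (a * d - (cmod c)\<^sup>2) \<ge> 0"
    using form[of d "- cnj c"] unfolding cmod_power2 by (simp add: power2_eq_square algebra_simps)
  moreover have "a * (cmod c)\<^sup>2 + d - 2 * (cmod c)\<^sup>2 \<ge> 0"
    using form[of "- c" 1] unfolding cmod_power2 by (simp add: power2_eq_square algebra_simps)
  ultimately have "(cmod c)\<^sup>2 \<le> a * d"
    using diag(3,4) unfolding a_def[symmetric] d_def[symmetric]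
    by (cases "a > 0 \<or> d > 0") (auto simp: zero_le_mult_iff)
  then show "?hermitian \<and> ?diag \<and> ?det"
    using diag herm by (simp add: a_def d_def c_def)
next
  assume "?hermitian \<and> ?diag \<and> ?det"
  then have diag: "Im (A$1$1) = 0" "Im (A$2$2) = 0" "Re (A$1$1) \<ge> 0" "Re (A$2$2) \<ge> 0"
    and herm: "A$2$1 = cnj (A$1$2)" and det: "(cmod (A$1$2))\<^sup>2 \<le> Re (A$1$1) * Re (A$2$2)"
    by auto
  define a d c where "a = Re (A$1$1)" and "d = Re (A$2$2)" and "c = A$1$2"
  have "Re (quad_form A v) \<ge> 0" for v
  proof -
    define x y where "x = cmod (v$1)" and "y = cmod (v$2)"
    have "cmod c \<le> sqrt a * sqrt d"
      using det by (simp add: a_def d_def c_def real_le_rsqrt flip: real_sqrt_mult)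
    then have "\<bar>Re (cnj (v$1) * c * v$2)\<bar> \<le> (sqrt a * x) * (sqrt d * y)"
      using abs_Re_le_cmod[of "cnj (v$1) * c * v$2"]
        mult_right_mono[of "cmod c" "sqrt a * sqrt d" "x * y"]
      by (simp add: x_def y_def norm_mult mult_ac)
    moreover have "2 * (sqrt a * x) * (sqrt d * y) \<le> a * x\<^sup>2 + d * y\<^sup>2"
      using sum_squares_bound[of "sqrt a * x" "sqrt d * y"] diag(3,4)
      by (simp add: a_def d_def power_mult_distrib)
    ultimately show ?thesis
      unfolding quad_form_2_hermitian[OF diag(1,2) herm]
      by (simp add: a_def d_def c_def x_def y_def)
  qed
  then show "psd A"
    by (simp add: psd_iff_quad_form quad_form_2_hermitian[OF diag(1,2) herm])
qed

lemma choi_depol_channel: "choi (depol_channel \<rho>) = tensor (mat 1) \<rho>"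
  by (simp add: choi_def depol_channel_def tensor_def ketbra_def mat_def vec_eq_iff sum_2 mtrace_2
      forall_2)

lemma mtrace_mult_tensor_id: "mtrace (\<tau> ** tensor (mat 1) \<rho>) = mtrace (ptrace1 \<tau> ** \<rho>)"
  by (simp add: mtrace_def matrix_matrix_mult_def tensor_def ptrace1_def mat_def sum_2 sum_UNIV_2x2
      algebra_simps)

lemma mtrace_ptrace1: "mtrace (ptrace1 \<tau>) = mtrace \<tau>"
  by (simp add: mtrace_def ptrace1_def sum_2 sum_UNIV_2x2)

lemma quad_form_ptrace1:
  "quad_form (ptrace1 \<tau>) v = (\<Sum>i\<in>UNIV. quad_form \<tau> (\<chi> p. if fst p = i then v $ snd p else 0))"
  by (simp add: quad_form_def ptrace1_def sum_2 sum_UNIV_2x2 algebra_simps)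

lemma psd_ptrace1: "psd \<tau> \<Longrightarrow> psd (ptrace1 \<tau>)"
  by (simp add: psd_iff_quad_form quad_form_ptrace1 sum_nonneg)

lemma density_ptrace1: "density \<tau> \<Longrightarrow> density (ptrace1 \<tau>)"
  by (simp add: density_def psd_ptrace1 mtrace_ptrace1)

definition bloch_state :: "real ^ 3 \<Rightarrow> op1" where
  "bloch_state v = (1/2) *\<^sub>R (mat 1 + v$1 *\<^sub>R pauli1 + v$2 *\<^sub>R pauli2 + v$3 *\<^sub>R pauli3)"

lemma bloch_state_entries [simp]:
  "bloch_state v $ 1 $ 1 = of_real ((1 + v$3) / 2)"
  "bloch_state v $ 1 $ 2 = Complex (v$1 / 2) (- v$2 / 2)"
  "bloch_state v $ 2 $ 1 = Complex (v$1 / 2) (v$2 / 2)"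
  "bloch_state v $ 2 $ 2 = of_real ((1 - v$3) / 2)"
  by (simp_all add: bloch_state_def mat_def pauli1_def pauli2_def pauli3_def complex_eq_iff)

lemma bloch_nth:
  "bloch X $ 1 = Re (X$1$2 + X$2$1)"
  "bloch X $ 2 = Im (X$2$1 - X$1$2)"
  "bloch X $ 3 = Re (X$1$1 - X$2$2)"
  by (simp_all add: bloch_def mtrace_mult_2 pauli1_def pauli2_def pauli3_def)

lemma bloch_bloch_state: "bloch (bloch_state v) = v"
  by (simp add: vec_eq_iff forall_3 bloch_nth field_simps)

lemma bloch_state_bloch:
  assumes "density \<rho>"
  shows "bloch_state (bloch \<rho>) = \<rho>"
proof -
  have "Im (\<rho>$1$1) = 0" "Im (\<rho>$2$2) = 0" "\<rho>$2$1 = cnj (\<rho>$1$2)" "\<rho>$1$1 + \<rho>$2$2 = 1"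
    using assms by (simp_all add: density_def psd_2x2_iff mtrace_2)
  then show ?thesis
    by (simp add: vec_eq_iff forall_2 bloch_nth complex_eq_iff field_simps)
qed

lemma norm_le_1_iff_3: "norm (v :: real ^ 3) \<le> 1 \<longleftrightarrow> (v$1)\<^sup>2 + (v$2)\<^sup>2 + (v$3)\<^sup>2 \<le> 1"
  by (simp add: norm_le_square inner_vec_def sum_3 power2_eq_square)

lemma density_bloch_state_iff: "density (bloch_state v) \<longleftrightarrow> norm v \<le> 1"
proof -
  have "density (bloch_state v) \<longleftrightarrow>
      \<bar>v$3\<bar> \<le> 1 \<and> (v$1)\<^sup>2 + (v$2)\<^sup>2 \<le> (1 + v$3) * (1 - v$3)"
    by (auto simp: density_def psd_2x2_iff mtrace_2 cmod_power2 abs_le_iff power_divide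
        complex_eq_iff simp flip: add_divide_distrib)
  also have "\<dots> \<longleftrightarrow> \<bar>v$3\<bar> \<le> 1 \<and> (v$1)\<^sup>2 + (v$2)\<^sup>2 + (v$3)\<^sup>2 \<le> 1"
    by (simp add: power2_eq_square algebra_simps)
  also have "\<dots> \<longleftrightarrow> (v$1)\<^sup>2 + (v$2)\<^sup>2 + (v$3)\<^sup>2 \<le> 1"
    using abs_square_le_1[of "v$3"] zero_le_power2[of "v$1"] zero_le_power2[of "v$2"] by linarith
  finally show ?thesis
    by (simp add: norm_le_1_iff_3)
qed

lemma norm_bloch_le_1: "density \<rho> \<Longrightarrow> norm (bloch \<rho>) \<le> 1"
  by (metis bloch_state_bloch density_bloch_state_iff)

lemma mtrace_mult_bloch_state:
  "mtrace (bloch_state u ** bloch_state v) = of_real ((1 + u \<bullet> v) / 2)"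
  by (simp add: mtrace_mult_2 inner_vec_def sum_3 complex_eq_iff field_simps)

theorem proposition1:
  fixes \<tau> :: op2
  assumes "density \<tau>"
  shows "complex_of_real ((1 + norm (bloch (ptrace1 \<tau>))) / 2)
           \<in> (\<lambda>\<Psi>. mtrace (\<tau> ** choi \<Psi>)) ` depol_set
       \<and> (\<forall>\<Psi>\<in>depol_set. mtrace (\<tau> ** choi \<Psi>) \<in> \<real>
            \<and> Re (mtrace (\<tau> ** choi \<Psi>)) \<le> (1 + norm (bloch (ptrace1 \<tau>))) / 2)"
proof -
  define s where "s = bloch (ptrace1 \<tau>)"
  have objective: "mtrace (\<tau> ** choi (depol_channel \<rho>)) = of_real ((1 + s \<bullet> bloch \<rho>) / 2)"
    if "density \<rho>" for \<rho>
  proof -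
    have "mtrace (\<tau> ** choi (depol_channel \<rho>)) = mtrace (bloch_state s ** bloch_state (bloch \<rho>))"
      using assms that
      by (simp add: choi_depol_channel mtrace_mult_tensor_id s_def bloch_state_bloch density_ptrace1)
    then show ?thesis
      by (simp add: mtrace_mult_bloch_state)
  qed
  \<comment> \<open>\<open>sgn 0 = 0\<close>: when \<open>s = 0\<close> every state is optimal.\<close>
  have optimal: "density (bloch_state (sgn s))"
    by (simp add: density_bloch_state_iff norm_sgn)
  moreover have "s \<bullet> sgn s = norm s"
    by (cases "s = 0") (simp_all add: sgn_div_norm dot_square_norm power2_eq_square)
  ultimately have
    "of_real ((1 + norm s) / 2) = mtrace (\<tau> ** choi (depol_channel (bloch_state (sgn s))))"
    by (simp add: objective bloch_bloch_state)
  moreover have "depol_channel (bloch_state (sgn s)) \<in> depol_set"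
    using optimal by (auto simp: depol_set_def)
  moreover have "s \<bullet> bloch \<rho> \<le> norm s" if "density \<rho>" for \<rho>
    using norm_cauchy_schwarz[of s "bloch \<rho>"]
      mult_left_mono[OF norm_bloch_le_1[OF that], of "norm s"]
    by simp
  ultimately show ?thesis
    unfolding s_def[symmetric] depol_set_def by (auto simp: objective)
qed

end
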